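(* On the group $G_{\mathtt{ALD}}$ define binary operations $g*h:=g\cdot\mathrm{sh}_1(h)\cdot S_\varepsilon\cdot\mathrm{sh}_1(g)^{-1}$ and $g\circ h:=g\cdot\mathrm{sh}_1(h)\cdot A_\varepsilon$. Then for all $g,h,k\in G_{\mathtt{ALD}}$ and $\square\in\{*,\circ\}$: $(g*h)\,\square\,(g*k)=(g*(h\,\square\,k))\cdot S_0$; $(g\circ h)*k=(g*(h*k))\cdot A_0$; $(g\cdot\mathrm{sh}_0(k))\,\square\,h=(g\,\square\,h)\cdot\mathrm{sh}_{00}(k)$; $g\,\square\,(h\cdot\mathrm{sh}_0(k))=(g\,\square\,h)\cdot\mathrm{sh}_{01}(k)$.
   Context: Addresses are finite sequences over $\{0,1\}$, $\varepsilon$ empty, concatenation by juxtaposition; two addresses are incomparable if neither is a prefix of the other. $G_{\mathtt{ALD}}$ is the group generated by elements $S_\alpha,A_\alpha$ ($\alpha\in\{0,1\}^*$) subject to the following relations, where $X,Y$ each stand for $S$ or $A$ and $\alpha,\beta,\delta$ are arbitrary addresses ($\delta$ possibly empty): $X_\alpha Y_\beta=Y_\beta X_\alpha$ for $\alpha,\beta$ incomparable; $X_{\alpha0\delta}S_\alpha=S_\alpha X_{\alpha00\delta}X_{\alpha10\delta}$; $X_{\alpha10\delta}S_\alpha=S_\alpha X_{\alpha01\delta}$; $X_{\alpha11\delta}S_\alpha=S_\alpha X_{\alpha11\delta}$; $X_{\alpha0\delta}A_\alpha=A_\alpha X_{\alpha00\delta}$; $X_{\alpha10\delta}A_\alpha=A_\alpha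 X_{\alpha01\delta}$; $X_{\alpha11\delta}A_\alpha=A_\alpha X_{\alpha1\delta}$; $S_\alpha S_{\alpha1}S_\alpha=S_{\alpha1}S_\alpha S_{\alpha1}S_{\alpha0}$; $S_\alpha S_{\alpha1}A_\alpha=A_{\alpha1}S_\alpha S_{\alpha0}$; $A_\alpha S_\alpha=S_{\alpha1}S_\alpha A_{\alpha1}A_{\alpha0}$. For an address $\beta$, $\mathrm{sh}_\beta$ is the endomorphism of $G_{\mathtt{ALD}}$ with $S_\alpha\mapsto S_{\beta\alpha}$, $A_\alpha\mapsto A_{\beta\alpha}$. *)

theory Defs
  imports Main "HOL-Library.Sublist"
begin

text \<open>Addresses are lists over bool (False = 0, True = 1); concatenation is append.\<close>
type_synonym addr = "bool list"

datatype gen = S addr | A addr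

text \<open>Letters: (True, x) is the generator x, (False, x) its formal inverse.\<close>
type_synonym word = "(bool \<times> gen) list"

definition incomparable :: "addr \<Rightarrow> addr \<Rightarrow> bool" where
  "incomparable a b \<longleftrightarrow> \<not> prefix a b \<and> \<not> prefix b a"

definition winv :: "word \<Rightarrow> word" where
  "winv w = rev (map (\<lambda>(b, x). (\<not> b, x)) w)"

fun pos :: "gen \<Rightarrow> bool \<times> gen" where "pos x = (True, x)"

inductive rel :: "word \<Rightarrow> word \<Rightarrow> bool" where
  comm: "X \<in> {S, A} \<Longrightarrow> Y \<in> {S, A} \<Longrightarrow> incomparable \<alpha> \<beta> \<Longrightarrow>
     rel [pos (X \<alpha>), pos (Y \<beta>)] [pos (Y \<beta>), pos (X \<alpha>)]"
| r1: "X \<in> {S, A} \<Longrightarrow> rel [pos (X (\<alpha> @ [False] @ \<delta>)), pos (S \<alpha>)]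
     [pos (S \<alpha>), pos (X (\<alpha> @ [False, False] @ \<delta>)), pos (X (\<alpha> @ [True, False] @ \<delta>))]"
| r2: "X \<in> {S, A} \<Longrightarrow> rel [pos (X (\<alpha> @ [True, False] @ \<delta>)), pos (S \<alpha>)]
     [pos (S \<alpha>), pos (X (\<alpha> @ [False, True] @ \<delta>))]"
| r3: "X \<in> {S, A} \<Longrightarrow> rel [pos (X (\<alpha> @ [True, True] @ \<delta>)), pos (S \<alpha>)]
     [pos (S \<alpha>), pos (X (\<alpha> @ [True, True] @ \<delta>))]"
| r4: "X \<in> {S, A} \<Longrightarrow> rel [pos (X (\<alpha> @ [False] @ \<delta>)), pos (A \<alpha>)]
     [pos (A \<alpha>), pos (X (\<alpha> @ [False, False] @ \<delta>))]"
| r5: "X \<in> {S, A} \<Longrightarrow> rel [pos (X (\<alpha> @ [True, False] @ \<delta>)), pos (A \<alpha>)]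
     [pos (A \<alpha>), pos (X (\<alpha> @ [False, True] @ \<delta>))]"
| r6: "X \<in> {S, A} \<Longrightarrow> rel [pos (X (\<alpha> @ [True, True] @ \<delta>)), pos (A \<alpha>)]
     [pos (A \<alpha>), pos (X (\<alpha> @ [True] @ \<delta>))]"
| r7: "rel [pos (S \<alpha>), pos (S (\<alpha> @ [True])), pos (S \<alpha>)]
     [pos (S (\<alpha> @ [True])), pos (S \<alpha>), pos (S (\<alpha> @ [True])), pos (S (\<alpha> @ [False]))]"
| r8: "rel [pos (S \<alpha>), pos (S (\<alpha> @ [True])), pos (A \<alpha>)]
     [pos (A (\<alpha> @ [True])), pos (S \<alpha>), pos (S (\<alpha> @ [False]))]"
| r9: "rel [pos (A \<alpha>), pos (S \<alpha>)]
     [pos (S (\<alpha> @ [True])), pos (S \<alpha>), pos (A (\<alpha> @ [True])), pos (A (\<alpha> @ [False]))]"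

text \<open>The congruence on words defining the presented group: generated by free
  cancellation and the relations, closed under concatenation contexts (and,
  harmlessly, under formal inversion, which holds in any group quotient).\<close>
inductive eqv :: "word \<Rightarrow> word \<Rightarrow> bool" where
  refl: "eqv w w"
| sym: "eqv u v \<Longrightarrow> eqv v u"
| trans: "eqv u v \<Longrightarrow> eqv v w \<Longrightarrow> eqv u w"
| ctx: "eqv u v \<Longrightarrow> eqv (w @ u @ z) (w @ v @ z)"
| inv: "eqv u v \<Longrightarrow> eqv (winv u) (winv v)"
| cancel: "eqv [(b, x), (\<not> b, x)] []"
| rel: "rel u v \<Longrightarrow> eqv u v"

lemma eqv_equivp: "equivp eqv"
  by (rule equivpI; auto intro: reflpI sympI transpI eqv.intros)

quotient_type G_ALD = word / eqv
  by (rule eqv_equivp)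

lemma eqv_append: "eqv u u' \<Longrightarrow> eqv v v' \<Longrightarrow> eqv (u @ v) (u' @ v')"
  using eqv.ctx[of u u' "[]" v] eqv.ctx[of v v' u' "[]"] eqv.trans by auto

lift_definition gmult :: "G_ALD \<Rightarrow> G_ALD \<Rightarrow> G_ALD" (infixl "\<cdot>" 70) is "(@)"
  by (rule eqv_append)

lift_definition ginv :: "G_ALD \<Rightarrow> G_ALD" is winv
  by (rule eqv.inv)

lift_definition gone :: G_ALD is "[]" .

lift_definition gS :: "addr \<Rightarrow> G_ALD" is "\<lambda>a. [(True, S a)]" .
lift_definition gA :: "addr \<Rightarrow> G_ALD" is "\<lambda>a. [(True, A a)]" .

fun shgen :: "addr \<Rightarrow> gen \<Rightarrow> gen" where
  "shgen b (S a) = S (b @ a)"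
| "shgen b (A a) = A (b @ a)"

definition shw :: "addr \<Rightarrow> word \<Rightarrow> word" where
  "shw b w = map (\<lambda>(e, x). (e, shgen b x)) w"

lemma shw_rel: "rel u v \<Longrightarrow> rel (shw b u) (shw b v)"
proof (induction rule: rel.induct)
  case (comm X Y \<alpha> \<beta>)
  have "incomparable (b @ \<alpha>) (b @ \<beta>)" using comm(3) by (simp add: incomparable_def)
  moreover have "shgen b (X \<alpha>) = X (b @ \<alpha>)" "shgen b (Y \<beta>) = Y (b @ \<beta>)"
    using comm(1,2) by auto
  ultimately show ?case using rel.comm[OF comm(1,2)] by (simp add: shw_def)
next
  case (r1 X \<alpha> \<delta>) then show ?case using rel.r1[of X "b @ \<alpha>" \<delta>] by (auto simp: shw_def)
next
  case (r2 X \<alpha> \<delta>) then show ?case using rel.r2[of X "b @ \<alpha>" \<delta>] by (auto simp: shw_def)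
next
  case (r3 X \<alpha> \<delta>) then show ?case using rel.r3[of X "b @ \<alpha>" \<delta>] by (auto simp: shw_def)
next
  case (r4 X \<alpha> \<delta>) then show ?case using rel.r4[of X "b @ \<alpha>" \<delta>] by (auto simp: shw_def)
next
  case (r5 X \<alpha> \<delta>) then show ?case using rel.r5[of X "b @ \<alpha>" \<delta>] by (auto simp: shw_def)
next
  case (r6 X \<alpha> \<delta>) then show ?case using rel.r6[of X "b @ \<alpha>" \<delta>] by (auto simp: shw_def)
next
  case (r7 \<alpha>) then show ?case using rel.r7[of "b @ \<alpha>"] by (auto simp: shw_def)
next
  case (r8 \<alpha>) then show ?case using rel.r8[of "b @ \<alpha>"] by (auto simp: shw_def)
next
  case (r9 \<alpha>) then show ?case using rel.r9[of "b @ \<alpha>"] by (auto simp: shw_def)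
qed

lemma shw_winv: "shw b (winv u) = winv (shw b u)"
  by (simp add: shw_def winv_def rev_map case_prod_beta comp_def)

lemma shw_eqv: "eqv u v \<Longrightarrow> eqv (shw b u) (shw b v)"
proof (induction rule: eqv.induct)
  case (inv u v) then show ?case using eqv.inv by (simp add: shw_winv)
next
  case (cancel c x) then show ?case using eqv.cancel by (simp add: shw_def)
qed (auto simp: shw_def intro: eqv.intros shw_rel[unfolded shw_def])

lift_definition sh :: "addr \<Rightarrow> G_ALD \<Rightarrow> G_ALD" is shw
  by (rule shw_eqv)

definition star :: "G_ALD \<Rightarrow> G_ALD \<Rightarrow> G_ALD" where
  "star g h = g \<cdot> sh [True] h \<cdot> gS [] \<cdot> ginv (sh [True] g)"

definition circ :: "G_ALD \<Rightarrow> G_ALD \<Rightarrow> G_ALD" where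
  "circ g h = g \<cdot> sh [True] h \<cdot> gA []"

end

theory Submission
  imports Defs
begin

text \<open>Every shift \<open>sh\<^sub>\<beta>\<close> is an endomorphism, and an endomorphism is determined by its values
  on the generators. Hence a relation that conjugation by \<open>S\<^sub>\<epsilon>\<close> or \<open>A\<^sub>\<epsilon>\<close> satisfies on the
  generators \<open>X\<^sub>\<beta>\<^sub>\<delta>\<close> holds for the whole shifted copy \<open>sh\<^sub>\<beta>(G)\<close>, and copies at incomparable
  addresses commute elementwise. The identities then reduce to short computations
  in which only the three relations involving \<open>S\<^sub>\<epsilon>, S\<^sub>1, A\<^sub>\<epsilon>\<close> at the root do genuine work:
  \<open>S\<^sub>\<epsilon>S\<^sub>1S\<^sub>\<epsilon> = S\<^sub>1S\<^sub>\<epsilon>S\<^sub>1S\<^sub>0\<close> gives the distributivity of \<open>*\<close>, \<open>S\<^sub>\<epsilon>S\<^sub>1A\<^sub>\<epsilon> = A\<^sub>1S\<^sub>\<epsilon>S\<^sub>0\<close>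
  that of \<open>\<circ>\<close> over \<open>*\<close>, and \<open>A\<^sub>\<epsilon>S\<^sub>\<epsilon> = S\<^sub>1S\<^sub>\<epsilon>A\<^sub>1A\<^sub>0\<close> the mixed associativity.\<close>

lemma eqv_winv_append: "eqv (winv w @ w) []"
proof (induction w)
  case Nil
  show ?case by (simp add: winv_def eqv.refl)
next
  case (Cons l w)
  obtain b x where l: "l = (b, x)" by fastforce
  have "eqv (winv w @ [(\<not> b, x), (\<not> \<not> b, x)] @ w) (winv w @ [] @ w)"
    by (rule eqv.ctx, rule eqv.cancel)
  then have "eqv (winv (l # w) @ l # w) (winv w @ w)"
    by (simp add: l winv_def)
  then show ?case using Cons.IH by (rule eqv.trans)
qed

interpretation G: group gmult gone ginv
proof
  fix a b c :: G_ALD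
  show "a \<cdot> b \<cdot> c = a \<cdot> (b \<cdot> c)" by transfer (simp add: eqv.refl)
  show "gone \<cdot> a = a" by transfer (simp add: eqv.refl)
  show "ginv a \<cdot> a = gone" by transfer (rule eqv_winv_append)
qed

lemma mult_cancel_right [simp]: "a \<cdot> b \<cdot> ginv b = a" "a \<cdot> ginv b \<cdot> b = a"
  by (simp_all add: G.assoc)

text \<open>Products are normalised to the left-associated form in which the statement is written;
  a step rewriting a subproduct therefore puts that subproduct in parentheses.\<close>
declare G.assoc [symmetric, simp] G.inverse_distrib_swap [simp]

lift_definition generator :: "gen \<Rightarrow> G_ALD" is "\<lambda>x. [(True, x)]" .

lemma generator_S [simp]: "generator (S a) = gS a"
  and generator_A [simp]: "generator (A a) = gA a"
  by (transfer, rule eqv.refl)+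

lemma abs_G_ALD_Nil [simp]: "abs_G_ALD [] = gone"
  by (simp add: gone.abs_eq)

lemma abs_G_ALD_Cons [simp]:
  "abs_G_ALD ((b, x) # w) = (if b then generator x else ginv (generator x)) \<cdot> abs_G_ALD w"
  by (simp add: gmult.abs_eq generator.abs_eq ginv.abs_eq winv_def)

lemma abs_G_ALD_eq_if_rel: "rel u v \<Longrightarrow> abs_G_ALD u = abs_G_ALD v"
  by (simp add: G_ALD.abs_eq_iff eqv.rel)

lemma generator_induct [case_names one generator inverse]:
  assumes "P gone"
    and "\<And>x g. P g \<Longrightarrow> P (generator x \<cdot> g)"
    and "\<And>x g. P g \<Longrightarrow> P (ginv (generator x) \<cdot> g)"
  shows "P g"
proof (induction g rule: G_ALD.abs_induct)
  case (1 w)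
  show ?case
  proof (induction w)
    case Nil
    show ?case using assms(1) by simp
  next
    case (Cons l w)
    then show ?case using assms(2,3) by (cases l) simp
  qed
qed

lemma gen_cases:
  obtains X \<delta> where "X \<in> {S, A}" "x = X \<delta>"
  by (cases x) auto

lemma shgen_S_A: "X \<in> {S, A} \<Longrightarrow> shgen b (X \<delta>) = X (b @ \<delta>)"
  by auto

lemma shgen_shgen [simp]: "shgen b (shgen c x) = shgen (b @ c) x"
  by (cases x) simp_all

lemma sh_mult [simp]: "sh b (x \<cdot> y) = sh b x \<cdot> sh b y"
  by transfer (simp add: shw_def eqv.refl)

lemma sh_ginv [simp]: "sh b (ginv x) = ginv (sh b x)"
  by transfer (simp add: shw_winv eqv.refl)

lemma sh_sh [simp]: "sh b (sh c x) = sh (b @ c) x"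
  by transfer (simp add: shw_def comp_def split_def eqv.refl)

lemma sh_generator [simp]: "sh b (generator x) = generator (shgen b x)"
  by transfer (simp add: shw_def eqv.refl)

lemma sh_gS [simp]: "sh b (gS a) = gS (b @ a)"
  and sh_gA [simp]: "sh b (gA a) = gA (b @ a)"
  by (simp_all flip: generator_S generator_A)

definition endomorphism :: "(G_ALD \<Rightarrow> G_ALD) \<Rightarrow> bool" where
  "endomorphism \<phi> \<longleftrightarrow> (\<forall>x y. \<phi> (x \<cdot> y) = \<phi> x \<cdot> \<phi> y)"

lemma endomorphism_gone:
  assumes "endomorphism \<phi>"
  shows "\<phi> gone = gone"
proof -
  have "\<phi> gone \<cdot> \<phi> gone = \<phi> gone \<cdot> gone"
    using assms unfolding endomorphism_def by (metis G.left_neutral G.right_neutral)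
  then show ?thesis by (simp only: G.left_cancel)
qed

lemma endomorphism_ginv:
  assumes "endomorphism \<phi>"
  shows "\<phi> (ginv x) = ginv (\<phi> x)"
proof -
  have "\<phi> x \<cdot> \<phi> (ginv x) = gone"
    using assms endomorphism_gone[OF assms] unfolding endomorphism_def by (metis G.right_inverse)
  then show ?thesis by (simp add: G.inverse_unique)
qed

lemma endomorphism_eqI:
  assumes "endomorphism \<phi>" "endomorphism \<psi>" "\<And>x. \<phi> (generator x) = \<psi> (generator x)"
  shows "\<phi> = \<psi>"
proof
  fix g
  show "\<phi> g = \<psi> g"
  proof (induction g rule: generator_induct)
    case one
    show ?case using assms(1,2) by (simp add: endomorphism_gone)
  next
    case (generator x g)
    then show ?case using assms by (simp add: endomorphism_def flip: G.assoc)
  next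
    case (inverse x g)
    then show ?case using assms by (simp add: endomorphism_def endomorphism_ginv flip: G.assoc)
  qed
qed

lemma endomorphism_sh: "endomorphism (sh b)"
  by (simp add: endomorphism_def)

lemma endomorphism_conj:
  assumes "endomorphism \<phi>"
  shows "endomorphism (\<lambda>x. c \<cdot> \<phi> x \<cdot> ginv c)"
  using assms by (simp add: endomorphism_def)

lemma endomorphism_pointwise_mult:
  assumes "endomorphism \<phi>" "endomorphism \<psi>" "\<And>x y. \<phi> x \<cdot> \<psi> y = \<psi> y \<cdot> \<phi> x"
  shows "endomorphism (\<lambda>x. \<phi> x \<cdot> \<psi> x)"
  using assms unfolding endomorphism_def by (metis G.assoc)

lemma endomorphism_intertwineI:
  assumes "endomorphism \<phi>" "endomorphism \<psi>"
    and "\<And>x. \<phi> (generator x) \<cdot> c = c \<cdot> \<psi> (generator x)"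
  shows "\<phi> g \<cdot> c = c \<cdot> \<psi> g"
proof -
  have "\<phi> = (\<lambda>x. c \<cdot> \<psi> x \<cdot> ginv c)"
  proof (rule endomorphism_eqI)
    show "endomorphism (\<lambda>x. c \<cdot> \<psi> x \<cdot> ginv c)"
      using assms(2) by (rule endomorphism_conj)
    fix x
    show "\<phi> (generator x) = c \<cdot> \<psi> (generator x) \<cdot> ginv c"
      using assms(3)[of x] by (metis mult_cancel_right(1))
  qed fact
  then show ?thesis by simp
qed

lemma incomparable_append: "incomparable a b \<Longrightarrow> incomparable (a @ c) (b @ d)"
  using parallel_append[of a b c d] by (simp add: incomparable_def parallel_def)

lemma generator_shgen_commute:
  assumes "incomparable a b"
  shows "generator (shgen a x) \<cdot> generator (shgen b y) = generator (shgen b y) \<cdot> generator (shgen a x)"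
proof -
  obtain X \<alpha> Y \<beta> where XY: "X \<in> {S, A}" "x = X \<alpha>" "Y \<in> {S, A}" "y = Y \<beta>"
    by (meson gen_cases)
  have "incomparable (a @ \<alpha>) (b @ \<beta>)"
    using assms by (rule incomparable_append)
  from abs_G_ALD_eq_if_rel[OF rel.comm[OF XY(1,3) this]] show ?thesis
    by (simp add: XY shgen_S_A[OF XY(1)] shgen_S_A[OF XY(3)])
qed

lemma sh_commute:
  assumes "incomparable a b"
  shows "sh a x \<cdot> sh b y = sh b y \<cdot> sh a x"
proof (rule endomorphism_intertwineI[OF endomorphism_sh endomorphism_sh])
  fix u
  have "incomparable b a"
    using assms by (simp add: incomparable_def)
  show "sh a (generator u) \<cdot> sh b y = sh b y \<cdot> sh a (generator u)"
    by (rule endomorphism_intertwineI[OF endomorphism_sh endomorphism_sh, symmetric])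
       (simp add: generator_shgen_commute \<open>incomparable b a\<close>)
qed

lemma sh0_sh1_commute: "sh [False] x \<cdot> sh [True] y = sh [True] y \<cdot> sh [False] x"
  by (rule sh_commute) (simp add: incomparable_def)

lemma sh0_S: "sh [False] k \<cdot> gS [] = gS [] \<cdot> sh [False, False] k \<cdot> sh [True, False] k"
proof -
  have "endomorphism (\<lambda>k. sh [False, False] k \<cdot> sh [True, False] k)"
    by (intro endomorphism_pointwise_mult endomorphism_sh sh_commute)
       (simp add: incomparable_def)
  then have "sh [False] k \<cdot> gS [] = gS [] \<cdot> (sh [False, False] k \<cdot> sh [True, False] k)"
  proof (rule endomorphism_intertwineI[OF endomorphism_sh])
    fix x
    show "sh [False] (generator x) \<cdot> gS [] =
      gS [] \<cdot> (sh [False, False] (generator x) \<cdot> sh [True, False] (generator x))"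
      using abs_G_ALD_eq_if_rel[OF rel.r1[of S "[]"]] abs_G_ALD_eq_if_rel[OF rel.r1[of A "[]"]]
      by (cases x) simp_all
  qed
  then show ?thesis by simp
qed

lemma sh10_S: "sh [True, False] k \<cdot> gS [] = gS [] \<cdot> sh [False, True] k"
proof (rule endomorphism_intertwineI[OF endomorphism_sh endomorphism_sh])
  fix x
  show "sh [True, False] (generator x) \<cdot> gS [] = gS [] \<cdot> sh [False, True] (generator x)"
    using abs_G_ALD_eq_if_rel[OF rel.r2[of S "[]"]] abs_G_ALD_eq_if_rel[OF rel.r2[of A "[]"]]
    by (cases x) simp_all
qed

lemma sh11_S: "sh [True, True] k \<cdot> gS [] = gS [] \<cdot> sh [True, True] k"
proof (rule endomorphism_intertwineI[OF endomorphism_sh endomorphism_sh])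
  fix x
  show "sh [True, True] (generator x) \<cdot> gS [] = gS [] \<cdot> sh [True, True] (generator x)"
    using abs_G_ALD_eq_if_rel[OF rel.r3[of S "[]"]] abs_G_ALD_eq_if_rel[OF rel.r3[of A "[]"]]
    by (cases x) simp_all
qed

lemma sh0_A: "sh [False] k \<cdot> gA [] = gA [] \<cdot> sh [False, False] k"
proof (rule endomorphism_intertwineI[OF endomorphism_sh endomorphism_sh])
  fix x
  show "sh [False] (generator x) \<cdot> gA [] = gA [] \<cdot> sh [False, False] (generator x)"
    using abs_G_ALD_eq_if_rel[OF rel.r4[of S "[]"]] abs_G_ALD_eq_if_rel[OF rel.r4[of A "[]"]]
    by (cases x) simp_all
qed

lemma sh10_A: "sh [True, False] k \<cdot> gA [] = gA [] \<cdot> sh [False, True] k"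
proof (rule endomorphism_intertwineI[OF endomorphism_sh endomorphism_sh])
  fix x
  show "sh [True, False] (generator x) \<cdot> gA [] = gA [] \<cdot> sh [False, True] (generator x)"
    using abs_G_ALD_eq_if_rel[OF rel.r5[of S "[]"]] abs_G_ALD_eq_if_rel[OF rel.r5[of A "[]"]]
    by (cases x) simp_all
qed

lemma sh11_A: "sh [True, True] k \<cdot> gA [] = gA [] \<cdot> sh [True] k"
proof (rule endomorphism_intertwineI[OF endomorphism_sh endomorphism_sh])
  fix x
  show "sh [True, True] (generator x) \<cdot> gA [] = gA [] \<cdot> sh [True] (generator x)"
    using abs_G_ALD_eq_if_rel[OF rel.r6[of S "[]"]] abs_G_ALD_eq_if_rel[OF rel.r6[of A "[]"]]
    by (cases x) simp_all
qed

lemma S_S1_S: "gS [] \<cdot> gS [True] \<cdot> gS [] = gS [True] \<cdot> gS [] \<cdot> gS [True] \<cdot> gS [False]"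
  using abs_G_ALD_eq_if_rel[OF rel.r7[of "[]"]] by simp

lemma S_S1_A: "gS [] \<cdot> gS [True] \<cdot> gA [] = gA [True] \<cdot> gS [] \<cdot> gS [False]"
  using abs_G_ALD_eq_if_rel[OF rel.r8[of "[]"]] by simp

lemma A_S: "gA [] \<cdot> gS [] = gS [True] \<cdot> gS [] \<cdot> gA [True] \<cdot> gA [False]"
  using abs_G_ALD_eq_if_rel[OF rel.r9[of "[]"]] by simp

lemma star_self_distrib: "star (star g h) (star g k) = star g (star h k) \<cdot> gS [False]"
proof -
  have "star (star g h) (star g k) =
      g \<cdot> sh [True] h \<cdot> (gS [] \<cdot> sh [True, True] k) \<cdot> gS [True] \<cdot> ginv (sh [True, True] g)
        \<cdot> (gS [] \<cdot> sh [True, True] g) \<cdot> ginv (gS [True]) \<cdot> ginv (sh [True, True] h)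
        \<cdot> ginv (sh [True] g)"
    by (simp add: star_def)
  also have "\<dots> = g \<cdot> sh [True] h \<cdot> sh [True, True] k \<cdot> (gS [] \<cdot> gS [True] \<cdot> gS [])
        \<cdot> ginv (gS [True]) \<cdot> ginv (sh [True, True] h) \<cdot> ginv (sh [True] g)"
    by (simp add: sh11_S [symmetric])
  also have "\<dots> = g \<cdot> sh [True] h \<cdot> sh [True, True] k \<cdot> gS [True] \<cdot> gS [] \<cdot> gS [True]
        \<cdot> (gS [False] \<cdot> ginv (gS [True]) \<cdot> ginv (sh [True, True] h) \<cdot> ginv (sh [True] g))"
    by (simp add: S_S1_S)
  also have "\<dots> = g \<cdot> sh [True] h \<cdot> sh [True, True] k \<cdot> gS [True]
        \<cdot> (gS [] \<cdot> ginv (sh [True, True] h)) \<cdot> ginv (sh [True] g) \<cdot> gS [False]"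
    using sh0_sh1_commute[of "gS []" "ginv (gS []) \<cdot> ginv (sh [True] h) \<cdot> ginv g"] by simp
  also have "\<dots> = g \<cdot> sh [True] h \<cdot> sh [True, True] k \<cdot> gS [True] \<cdot> ginv (sh [True, True] h)
        \<cdot> gS [] \<cdot> ginv (sh [True] g) \<cdot> gS [False]"
    using sh11_S[of "ginv h", symmetric] by simp
  also have "\<dots> = star g (star h k) \<cdot> gS [False]"
    by (simp add: star_def)
  finally show ?thesis .
qed

lemma circ_star_distrib: "circ (star g h) (star g k) = star g (circ h k) \<cdot> gS [False]"
proof -
  have "circ (star g h) (star g k) =
      g \<cdot> sh [True] h \<cdot> (gS [] \<cdot> sh [True, True] k) \<cdot> gS [True]
        \<cdot> (ginv (sh [True, True] g) \<cdot> gA [])"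
    by (simp add: star_def circ_def)
  also have "\<dots> = g \<cdot> sh [True] h \<cdot> sh [True, True] k \<cdot> (gS [] \<cdot> gS [True] \<cdot> gA [])
        \<cdot> ginv (sh [True] g)"
    using sh11_A[of "ginv g"] by (simp add: sh11_S [symmetric])
  also have "\<dots> = g \<cdot> sh [True] h \<cdot> sh [True, True] k \<cdot> gA [True] \<cdot> gS []
        \<cdot> (gS [False] \<cdot> ginv (sh [True] g))"
    by (simp add: S_S1_A)
  also have "\<dots> = g \<cdot> sh [True] h \<cdot> sh [True, True] k \<cdot> gA [True] \<cdot> gS []
        \<cdot> ginv (sh [True] g) \<cdot> gS [False]"
    using sh0_sh1_commute[of "gS []" "ginv g"] by simp
  also have "\<dots> = star g (circ h k) \<cdot> gS [False]"
    by (simp add: star_def circ_def)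
  finally show ?thesis .
qed

lemma star_circ_assoc: "star (circ g h) k = star g (star h k) \<cdot> gA [False]"
proof -
  have "star (circ g h) k = g \<cdot> sh [True] h \<cdot> (gA [] \<cdot> sh [True] k) \<cdot> gS []
        \<cdot> ginv (gA [True]) \<cdot> ginv (sh [True, True] h) \<cdot> ginv (sh [True] g)"
    by (simp add: star_def circ_def)
  also have "\<dots> = g \<cdot> sh [True] h \<cdot> sh [True, True] k \<cdot> (gA [] \<cdot> gS [])
        \<cdot> ginv (gA [True]) \<cdot> ginv (sh [True, True] h) \<cdot> ginv (sh [True] g)"
    by (simp add: sh11_A [symmetric])
  also have "\<dots> = g \<cdot> sh [True] h \<cdot> sh [True, True] k \<cdot> gS [True] \<cdot> gS [] \<cdot> gA [True]
        \<cdot> (gA [False] \<cdot> ginv (gA [True]) \<cdot> ginv (sh [True, True] h) \<cdot> ginv (sh [True] g))"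
    by (simp add: A_S)
  also have "\<dots> = g \<cdot> sh [True] h \<cdot> sh [True, True] k \<cdot> gS [True]
        \<cdot> (gS [] \<cdot> ginv (sh [True, True] h)) \<cdot> ginv (sh [True] g) \<cdot> gA [False]"
    using sh0_sh1_commute[of "gA []" "ginv (gA []) \<cdot> ginv (sh [True] h) \<cdot> ginv g"] by simp
  also have "\<dots> = g \<cdot> sh [True] h \<cdot> sh [True, True] k \<cdot> gS [True] \<cdot> ginv (sh [True, True] h)
        \<cdot> gS [] \<cdot> ginv (sh [True] g) \<cdot> gA [False]"
    using sh11_S[of "ginv h", symmetric] by simp
  also have "\<dots> = star g (star h k) \<cdot> gA [False]"
    by (simp add: star_def)
  finally show ?thesis .
qed

lemma star_mult_sh0_left: "star (g \<cdot> sh [False] k) h = star g h \<cdot> sh [False, False] k"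
proof -
  have "star (g \<cdot> sh [False] k) h =
      g \<cdot> (sh [False] k \<cdot> sh [True] h) \<cdot> gS [] \<cdot> ginv (sh [True, False] k) \<cdot> ginv (sh [True] g)"
    by (simp add: star_def)
  also have "\<dots> = g \<cdot> sh [True] h \<cdot> (sh [False] k \<cdot> gS [])
        \<cdot> ginv (sh [True, False] k) \<cdot> ginv (sh [True] g)"
    by (simp add: sh0_sh1_commute)
  also have "\<dots> = g \<cdot> sh [True] h \<cdot> gS [] \<cdot> (sh [False, False] k \<cdot> ginv (sh [True] g))"
    by (simp add: sh0_S)
  also have "\<dots> = star g h \<cdot> sh [False, False] k"
    using sh0_sh1_commute[of "sh [False] k" "ginv g"] by (simp add: star_def)
  finally show ?thesis .
qed

lemma circ_mult_sh0_left: "circ (g \<cdot> sh [False] k) h = circ g h \<cdot> sh [False, False] k"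
proof -
  have "circ (g \<cdot> sh [False] k) h = g \<cdot> (sh [False] k \<cdot> sh [True] h) \<cdot> gA []"
    by (simp add: circ_def)
  also have "\<dots> = g \<cdot> sh [True] h \<cdot> (sh [False] k \<cdot> gA [])"
    by (simp add: sh0_sh1_commute)
  also have "\<dots> = circ g h \<cdot> sh [False, False] k"
    by (simp add: sh0_A circ_def)
  finally show ?thesis .
qed

lemma star_mult_sh0_right: "star g (h \<cdot> sh [False] k) = star g h \<cdot> sh [False, True] k"
proof -
  have "star g (h \<cdot> sh [False] k) = g \<cdot> sh [True] h \<cdot> (sh [True, False] k \<cdot> gS []) \<cdot> ginv (sh [True] g)"
    by (simp add: star_def)
  also have "\<dots> = g \<cdot> sh [True] h \<cdot> gS [] \<cdot> (sh [False, True] k \<cdot> ginv (sh [True] g))"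
    by (simp add: sh10_S)
  also have "\<dots> = star g h \<cdot> sh [False, True] k"
    using sh0_sh1_commute[of "sh [True] k" "ginv g"] by (simp add: star_def)
  finally show ?thesis .
qed

lemma circ_mult_sh0_right: "circ g (h \<cdot> sh [False] k) = circ g h \<cdot> sh [False, True] k"
proof -
  have "circ g (h \<cdot> sh [False] k) = g \<cdot> sh [True] h \<cdot> (sh [True, False] k \<cdot> gA [])"
    by (simp add: circ_def)
  also have "\<dots> = circ g h \<cdot> sh [False, True] k"
    by (simp add: sh10_A circ_def)
  finally show ?thesis .
qed

theorem lemma4p3:
  fixes g h k :: G_ALD and op :: "G_ALD \<Rightarrow> G_ALD \<Rightarrow> G_ALD"
  assumes "op \<in> {star, circ}"
  shows "op (star g h) (star g k) = star g (op h k) \<cdot> gS [False]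
     \<and> star (circ g h) k = star g (star h k) \<cdot> gA [False]
     \<and> op (g \<cdot> sh [False] k) h = op g h \<cdot> sh [False, False] k
     \<and> op g (h \<cdot> sh [False] k) = op g h \<cdot> sh [False, True] k"
  using assms star_self_distrib circ_star_distrib star_circ_assoc star_mult_sh0_left
    circ_mult_sh0_left star_mult_sh0_right circ_mult_sh0_right
  by auto

end
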